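(* Let $\Gamma$ be a finite simplicial graph with property (B2): for all $v,w\in V(\Gamma)$ with $v\le w$ there exists $u\in V(\Gamma)$, $u\ne v,w$, with $v\le u\le w$. Let $v,w\in V(\Gamma)$ be distinct with $v\le w$, and let $t_{vw}$ be the corresponding transvection. Then for every integer $m\ge 0$, $t_{vw}^{m^2}\in\mathrm{S}\mathcal{I}A'_\Gamma(m)$.
   Context: $n=|V(\Gamma)|$. For $v\in V(\Gamma)$, $\mathrm{lk}(v)$ is the set of vertices adjacent to $v$ and $\mathrm{st}(v)=\mathrm{lk}(v)\cup\{v\}$; $v\le w$ iff $\mathrm{lk}(v)\subset\mathrm{st}(w)$. $A_\Gamma=\langle V(\Gamma)\mid [u,v]=1 \text{ whenever } u,v \text{ adjacent}\rangle$. Transvection: for distinct $v,w$ with $v\le w$, $t_{vw}$ maps $v\mapsto vw$, fixing other vertices; partial conjugation $c_{v,Y}$ ($Y$ a connected component of $\Gamma-\mathrm{st}(v)$) maps $x\mapsto v^{-1}xv$ for $x\in Y$, fixing others. $\mathrm{SAut}^0(A_\Gamma)$ is generated by transvections and partial conjugations; $\mathrm{S}\mathcal{I}A_\Gamma(m)$ is the kernel of $\mathrm{SAut}^0(A_\Gamma)\to\mathrm{SL}(n,\mathbb{Z})\to\mathrm{SL}(n,\mathbb{Z}/m\mathbb{Z})$ (action on $H_1(A_\Gamma;\mathbb Z)=\mathbb Z^n$, then reduction mod $m$), and $\mathrm{S}\mathcal{I}A'_\Gamma(m)$ denotes its commutator subgroup. *)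

theory Defs
  imports "HOL-Algebra.Algebra" "HOL-Number_Theory.Cong"
begin

text \<open>A finite simplicial graph: vertices form the finite type 'v, E is the
  (symmetric, irreflexive) adjacency relation.\<close>

definition simplicial_graph :: "('v \<Rightarrow> 'v \<Rightarrow> bool) \<Rightarrow> bool" where
  "simplicial_graph E \<longleftrightarrow> (\<forall>u v. E u v \<longrightarrow> E v u) \<and> (\<forall>u. \<not> E u u)"

definition lk :: "('v \<Rightarrow> 'v \<Rightarrow> bool) \<Rightarrow> 'v \<Rightarrow> 'v set" where
  "lk E v = {u. E v u}"

definition st :: "('v \<Rightarrow> 'v \<Rightarrow> bool) \<Rightarrow> 'v \<Rightarrow> 'v set" where
  "st E v = insert v (lk E v)"

definition dom_le :: "('v \<Rightarrow> 'v \<Rightarrow> bool) \<Rightarrow> 'v \<Rightarrow> 'v \<Rightarrow> bool" where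
  "dom_le E v w \<longleftrightarrow> lk E v \<subseteq> st E w"

definition property_B2 :: "('v \<Rightarrow> 'v \<Rightarrow> bool) \<Rightarrow> bool" where
  "property_B2 E \<longleftrightarrow> (\<forall>v w. v \<noteq> w \<and> dom_le E v w \<longrightarrow>
      (\<exists>u. u \<noteq> v \<and> u \<noteq> w \<and> dom_le E v u \<and> dom_le E u w))"

text \<open>Words in the generators and their inverses: (a, True) = a, (a, False) = a^-1.\<close>

type_synonym 'v word = "('v \<times> bool) list"

definition raag_step :: "('v \<Rightarrow> 'v \<Rightarrow> bool) \<Rightarrow> ('v word \<times> 'v word) set" where
  "raag_step E =
     {(xs @ [(a, b), (a, \<not> b)] @ ys, xs @ ys) | xs ys a b. True} \<union>
     {(xs @ [(a, b), (c, d)] @ ys, xs @ [(c, d), (a, b)] @ ys) | xs ys a b c d. E a c}"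

definition raag_rel :: "('v \<Rightarrow> 'v \<Rightarrow> bool) \<Rightarrow> ('v word \<times> 'v word) set" where
  "raag_rel E = (raag_step E \<union> converse (raag_step E))\<^sup>*"

definition raag_class :: "('v \<Rightarrow> 'v \<Rightarrow> bool) \<Rightarrow> 'v word \<Rightarrow> 'v word set" where
  "raag_class E x = raag_rel E `` {x}"

definition raag_mult :: "('v \<Rightarrow> 'v \<Rightarrow> bool) \<Rightarrow> 'v word set \<Rightarrow> 'v word set \<Rightarrow> 'v word set" where
  "raag_mult E P Q = {z. \<exists>x\<in>P. \<exists>y\<in>Q. (x @ y, z) \<in> raag_rel E}"

definition RAAG :: "('v \<Rightarrow> 'v \<Rightarrow> bool) \<Rightarrow> 'v word set monoid" where
  "RAAG E = \<lparr> carrier = UNIV // raag_rel E,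
              monoid.mult = raag_mult E,
              one = raag_class E [] \<rparr>"

definition inv_word :: "'v word \<Rightarrow> 'v word" where
  "inv_word xs = rev (map (\<lambda>(a, b). (a, \<not> b)) xs)"

definition subst_word :: "('v \<Rightarrow> 'v word) \<Rightarrow> 'v word \<Rightarrow> 'v word" where
  "subst_word \<sigma> xs = concat (map (\<lambda>(a, b). if b then \<sigma> a else inv_word (\<sigma> a)) xs)"

definition raag_endo :: "('v \<Rightarrow> 'v \<Rightarrow> bool) \<Rightarrow> ('v \<Rightarrow> 'v word) \<Rightarrow> 'v word set \<Rightarrow> 'v word set" where
  "raag_endo E \<sigma> = (\<lambda>P \<in> carrier (RAAG E). {z. \<exists>x\<in>P. (subst_word \<sigma> x, z) \<in> raag_rel E})"

definition transvection :: "('v \<Rightarrow> 'v \<Rightarrow> bool) \<Rightarrow> 'v \<Rightarrow> 'v \<Rightarrow> 'v word set \<Rightarrow> 'v word set" where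
  "transvection E v w =
     raag_endo E (\<lambda>u. if u = v then [(v, True), (w, True)] else [(u, True)])"

definition components_off_star :: "('v \<Rightarrow> 'v \<Rightarrow> bool) \<Rightarrow> 'v \<Rightarrow> 'v set set" where
  "components_off_star E v =
     (UNIV - st E v) // ({(a, b). E a b \<and> a \<notin> st E v \<and> b \<notin> st E v}\<^sup>*)"

definition partial_conj :: "('v \<Rightarrow> 'v \<Rightarrow> bool) \<Rightarrow> 'v \<Rightarrow> 'v set \<Rightarrow> 'v word set \<Rightarrow> 'v word set" where
  "partial_conj E v C =
     raag_endo E (\<lambda>u. if u \<in> C then [(v, False), (u, True), (v, True)] else [(u, True)])"

definition SAut0 :: "('v \<Rightarrow> 'v \<Rightarrow> bool) \<Rightarrow> ('v word set \<Rightarrow> 'v word set) set" where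
  "SAut0 E = generate (AutoGroup (RAAG E))
     ({transvection E v w | v w. v \<noteq> w \<and> dom_le E v w} \<union>
      {partial_conj E v C | v C. C \<in> components_off_star E v})"

definition expsum :: "'v \<Rightarrow> 'v word \<Rightarrow> int" where
  "expsum u xs = int (length (filter (\<lambda>l. l = (u, True)) xs))
               - int (length (filter (\<lambda>l. l = (u, False)) xs))"

definition expsum_cls :: "'v \<Rightarrow> 'v word set \<Rightarrow> int" where
  "expsum_cls u P = expsum u (SOME x. x \<in> P)"

text \<open>Matrix of the action of phi on H_1(A_Gamma;Z) = Z^n: entry (x,y) is the
  y-coordinate of the image of the generator x.\<close>
definition H1_matrix :: "('v \<Rightarrow> 'v \<Rightarrow> bool) \<Rightarrow> ('v word set \<Rightarrow> 'v word set) \<Rightarrow> 'v \<Rightarrow> 'v \<Rightarrow> int" where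
  "H1_matrix E \<phi> x y = expsum_cls y (\<phi> (raag_class E [(x, True)]))"

text \<open>SIA_Gamma(m): kernel of SAut^0 \<rightarrow> SL(n,Z) \<rightarrow> SL(n,Z/mZ).\<close>
definition SIA :: "('v \<Rightarrow> 'v \<Rightarrow> bool) \<Rightarrow> nat \<Rightarrow> ('v word set \<Rightarrow> 'v word set) set" where
  "SIA E m = {\<phi> \<in> SAut0 E. \<forall>x y. [H1_matrix E \<phi> x y = (if x = y then 1 else 0)] (mod int m)}"

definition SIA' :: "('v \<Rightarrow> 'v \<Rightarrow> bool) \<Rightarrow> nat \<Rightarrow> ('v word set \<Rightarrow> 'v word set) set" where
  "SIA' E m = derived (AutoGroup (RAAG E)) (SIA E m)"

end

(*
  By property (B2) there is a vertex u with v \<le> u \<le> w.  For a word x in u and w the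
  substitution v \<mapsto> v x defines an automorphism T(x), and x \<mapsto> T(x) is multiplicative; T(x)
  lies in SIA(m) when the exponent sums of x are divisible by m, so commutators of such
  automorphisms lie in SIA'(m).  Conjugation by b = t_uw^m sends T(x) to T(b(x)), hence
  [b, T(u^m)] = T((u w^m)^m u^-m) lies in SIA'(m).  If u and w commute, (u w^m)^m u^-m = w^(m^2)
  and T(w^(m^2)) is the required power of t_vw.  Otherwise v and u do not commute either, so
  conjugation of v by u is a partial conjugation in SIA(m); its commutators with T(x) show that
  T(u^i w^m u^-i w^-m) lies in SIA'(m) for all i, and since (u w^m)^m u^-m is the product of the
  conjugates u^i w^m u^-i (1 \<le> i \<le> m), commutators of the T's reorder this product into
  w^(m^2) modulo SIA'(m).
*)

theory Submission
  imports Defs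
begin

lemma inv_word_Nil [simp]: "inv_word [] = []"
  by (simp add: inv_word_def)

lemma inv_word_Cons [simp]: "inv_word (l # x) = inv_word x @ [(fst l, \<not> snd l)]"
  by (simp add: inv_word_def case_prod_beta)

lemma inv_word_append [simp]: "inv_word (x @ y) = inv_word y @ inv_word x"
  by (simp add: inv_word_def)

lemma inv_word_inv_word [simp]: "inv_word (inv_word x) = x"
  by (induction x) auto

lemma fst_set_inv_word [simp]: "fst ` set (inv_word x) = fst ` set x"
  by (simp add: inv_word_def image_image case_prod_beta)

lemma inv_word_replicate [simp]: "inv_word (replicate n (a, b)) = replicate n (a, \<not> b)"
  by (induction n) (auto simp: replicate_append_same)

lemma subst_word_Nil [simp]: "subst_word \<sigma> [] = []"
  by (simp add: subst_word_def)

lemma subst_word_Cons [simp]: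
  "subst_word \<sigma> (l # x) = (if snd l then \<sigma> (fst l) else inv_word (\<sigma> (fst l))) @ subst_word \<sigma> x"
  by (simp add: subst_word_def case_prod_beta)

lemma subst_word_append [simp]: "subst_word \<sigma> (x @ y) = subst_word \<sigma> x @ subst_word \<sigma> y"
  by (simp add: subst_word_def)

lemma subst_word_inv_word [simp]: "subst_word \<sigma> (inv_word x) = inv_word (subst_word \<sigma> x)"
  by (induction x) auto

lemma subst_word_subst_word:
  "subst_word \<sigma> (subst_word \<tau> x) = subst_word (\<lambda>a. subst_word \<sigma> (\<tau> a)) x"
  by (induction x) auto

lemma subst_word_letters [simp]: "subst_word (\<lambda>a. [(a, True)]) x = x"
  by (induction x) auto

lemma subst_word_fixing:
  assumes "\<And>a. a \<in> fst ` set x \<Longrightarrow> \<sigma> a = [(a, True)]"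
  shows "subst_word \<sigma> x = x"
  using assms by (induction x) auto

lemma subst_word_replicate:
  "subst_word \<sigma> (replicate n l) = concat (replicate n (subst_word \<sigma> [l]))"
  by (induction n) auto

lemma fst_set_subst_word:
  "fst ` set (subst_word \<sigma> x) = (\<Union>a \<in> fst ` set x. fst ` set (\<sigma> a))"
proof (induction x)
  case (Cons l x)
  have "fst ` set (if snd l then \<sigma> (fst l) else inv_word (\<sigma> (fst l))) = fst ` set (\<sigma> (fst l))"
    by simp
  with Cons.IH show ?case by (simp add: image_Un)
qed simp

lemma expsum_Nil [simp]: "expsum u [] = 0"
  by (simp add: expsum_def)

lemma expsum_Cons [simp]:
  "expsum u (l # x) = (if l = (u, True) then 1 else if l = (u, False) then -1 else 0) + expsum u x"
  by (auto simp: expsum_def)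

lemma expsum_append [simp]: "expsum u (x @ y) = expsum u x + expsum u y"
  by (simp add: expsum_def)

lemma expsum_inv_word [simp]: "expsum u (inv_word x) = - expsum u x"
  by (induction x) auto

lemma expsum_replicate [simp]: "expsum u (replicate n l) = int n * expsum u [l]"
  by (induction n) (auto simp: algebra_simps)

lemma expsum_eq_0: "u \<notin> fst ` set x \<Longrightarrow> expsum u x = 0"
  by (induction x) (auto simp: image_iff)

definition point_subst :: "'v \<Rightarrow> 'v word \<Rightarrow> 'v \<Rightarrow> 'v word" where
  "point_subst a z = (\<lambda>c. if c = a then z else [(c, True)])"

lemma subst_word_point_subst_fixing: "a \<notin> fst ` set x \<Longrightarrow> subst_word (point_subst a z) x = x"
  by (rule subst_word_fixing) (auto simp: point_subst_def)


section \<open>Equivalence of words in a right-angled Artin group\<close>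

definition raag_equiv :: "('v \<Rightarrow> 'v \<Rightarrow> bool) \<Rightarrow> 'v word \<Rightarrow> 'v word \<Rightarrow> bool" where
  "raag_equiv E x y \<longleftrightarrow> (x, y) \<in> raag_rel E"

lemma raag_step_cancel: "(p @ [(a, b), (a, \<not> b)] @ q, p @ q) \<in> raag_step E"
  unfolding raag_step_def by blast

lemma raag_step_swap: "E a c \<Longrightarrow> (p @ [(a, b), (c, d)] @ q, p @ [(c, d), (a, b)] @ q) \<in> raag_step E"
  unfolding raag_step_def by blast

locale raag =
  fixes E :: "'v \<Rightarrow> 'v \<Rightarrow> bool"
  assumes adj_sym: "E a b \<Longrightarrow> E b a"
begin

abbreviation word_equiv (infix "\<approx>\<^sub>E" 50) where "x \<approx>\<^sub>E y \<equiv> raag_equiv E x y"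
abbreviation cls where "cls \<equiv> raag_class E"
abbreviation G where "G \<equiv> RAAG E"
abbreviation AG where "AG \<equiv> AutoGroup (RAAG E)"

lemma raag_step_context:
  assumes "(x, y) \<in> raag_step E"
  shows "(p @ x @ q, p @ y @ q) \<in> raag_step E"
proof -
  from assms consider
      (cancel) xs ys a b where "x = xs @ [(a, b), (a, \<not> b)] @ ys" "y = xs @ ys"
    | (swap) xs ys a b c d where "x = xs @ [(a, b), (c, d)] @ ys" "y = xs @ [(c, d), (a, b)] @ ys" "E a c"
    unfolding raag_step_def by blast
  then show ?thesis
  proof cases
    case cancel
    then show ?thesis using raag_step_cancel[where p = "p @ xs" and q = "ys @ q"] by simp
  next
    case swap
    then show ?thesis using raag_step_swap[where p = "p @ xs" and q = "ys @ q"] by simp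
  qed
qed

lemma rel_refl [simp]: "x \<approx>\<^sub>E x"
  by (simp add: raag_equiv_def raag_rel_def)

lemma rel_sym: "x \<approx>\<^sub>E y \<Longrightarrow> y \<approx>\<^sub>E x"
  unfolding raag_equiv_def raag_rel_def by (metis sym_Un_converse sym_rtrancl symD)

lemma rel_trans [trans]: "x \<approx>\<^sub>E y \<Longrightarrow> y \<approx>\<^sub>E z \<Longrightarrow> x \<approx>\<^sub>E z"
  unfolding raag_equiv_def raag_rel_def by (rule rtrancl_trans)

lemma rel_context: "x \<approx>\<^sub>E y \<Longrightarrow> p @ x @ q \<approx>\<^sub>E p @ y @ q"
  unfolding raag_equiv_def raag_rel_def
proof (induction rule: rtrancl_induct)
  case (step y z)
  then have "(p @ y @ q, p @ z @ q) \<in> raag_step E \<union> (raag_step E)\<inverse>"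
    using raag_step_context by blast
  with step.IH show ?case by (rule rtrancl_into_rtrancl)
qed simp

lemma rel_append: "x \<approx>\<^sub>E x' \<Longrightarrow> y \<approx>\<^sub>E y' \<Longrightarrow> x @ y \<approx>\<^sub>E x' @ y'"
  using rel_context[of x x' "[]" y] rel_context[of y y' x' "[]"] by (auto intro: rel_trans)

lemma rel_cancel: "p @ [(a, b), (a, \<not> b)] @ q \<approx>\<^sub>E p @ q"
  using raag_step_cancel unfolding raag_equiv_def raag_rel_def by (intro r_into_rtrancl UnI1)

lemma rel_swap: "E a c \<Longrightarrow> p @ [(a, b), (c, d)] @ q \<approx>\<^sub>E p @ [(c, d), (a, b)] @ q"
  using raag_step_swap unfolding raag_equiv_def raag_rel_def by (intro r_into_rtrancl UnI1)

lemma rel_append_inv_word: "x @ inv_word x \<approx>\<^sub>E []"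
proof (induction x)
  case (Cons l x)
  have "l # x @ inv_word x @ [(fst l, \<not> snd l)] \<approx>\<^sub>E [l] @ [] @ [(fst l, \<not> snd l)]"
    using rel_context[OF Cons.IH, of "[l]" "[(fst l, \<not> snd l)]"] by simp
  also have "\<dots> \<approx>\<^sub>E []"
    using rel_cancel[of "[]" "fst l" "snd l" "[]"] by simp
  finally show ?case by simp
qed simp

lemma rel_inv_word_append: "inv_word x @ x \<approx>\<^sub>E []"
  using rel_append_inv_word[of "inv_word x"] by simp

lemma rel_cancel_word: "p @ x @ inv_word x @ q \<approx>\<^sub>E p @ q"
  using rel_context[OF rel_append_inv_word] by simp

lemma rel_cancel_inv_word: "p @ inv_word x @ x @ q \<approx>\<^sub>E p @ q"
  using rel_context[OF rel_inv_word_append] by simp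

lemma rel_inv_word:
  assumes "x \<approx>\<^sub>E y"
  shows "inv_word x \<approx>\<^sub>E inv_word y"
proof -
  have "inv_word x \<approx>\<^sub>E inv_word x @ y @ inv_word y"
    using rel_sym[OF rel_cancel_word[of "inv_word x" y "[]"]] by simp
  also have "\<dots> \<approx>\<^sub>E inv_word x @ x @ inv_word y"
    using rel_context[OF rel_sym[OF assms]] .
  also have "\<dots> \<approx>\<^sub>E inv_word y"
    using rel_cancel_inv_word[of "[]" x "inv_word y"] by simp
  finally show ?thesis .
qed

lemma rel_commute_inv_word:
  assumes "x @ y \<approx>\<^sub>E y @ x"
  shows "inv_word x @ y \<approx>\<^sub>E y @ inv_word x"
proof -
  have "inv_word x @ y \<approx>\<^sub>E inv_word x @ (y @ x) @ inv_word x"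
    using rel_sym[OF rel_cancel_word[of "inv_word x @ y" x "[]"]] by simp
  also have "\<dots> \<approx>\<^sub>E inv_word x @ (x @ y) @ inv_word x"
    using rel_context[OF rel_sym[OF assms]] .
  also have "\<dots> \<approx>\<^sub>E y @ inv_word x"
    using rel_cancel_inv_word[of "[]" x "y @ inv_word x"] by simp
  finally show ?thesis .
qed

lemma rel_commute_signed:
  assumes "x @ y \<approx>\<^sub>E y @ x"
  shows "(if b then x else inv_word x) @ (if d then y else inv_word y)
           \<approx>\<^sub>E (if d then y else inv_word y) @ (if b then x else inv_word x)"
proof -
  have yx: "inv_word y @ x \<approx>\<^sub>E x @ inv_word y"
    using rel_commute_inv_word[OF rel_sym[OF assms]] .
  have "inv_word x @ inv_word y \<approx>\<^sub>E inv_word y @ inv_word x"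
    using rel_commute_inv_word[OF rel_sym[OF yx]] by simp
  then show ?thesis
    using assms rel_sym[OF yx] rel_commute_inv_word[OF assms] by (cases b; cases d) simp_all
qed

lemma rel_letter_commute:
  assumes "\<And>c. c \<in> fst ` set y \<Longrightarrow> c = d \<or> E d c"
  shows "[(d, e)] @ y \<approx>\<^sub>E y @ [(d, e)]"
  using assms
proof (induction y)
  case (Cons l y)
  obtain c f where l: "l = (c, f)" by force
  have IH: "[(d, e)] @ y \<approx>\<^sub>E y @ [(d, e)]"
    using Cons by simp
  have "[(d, e), l] @ y \<approx>\<^sub>E [l, (d, e)] @ y"
  proof (cases "c = d")
    case True
    then consider "l = (d, e)" | "l = (d, \<not> e)" using l by auto
    then show ?thesis
    proof cases
      case 2
      then show ?thesis
        using rel_trans[OF rel_cancel[of "[]" d e y] rel_sym[OF rel_cancel[of "[]" d "\<not> e" y]]]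
        by simp
    qed simp
  next
    case False
    then have "E d c" using Cons.prems l by auto
    then show ?thesis using rel_swap[of d c "[]" e f y] l by simp
  qed
  also have "\<dots> \<approx>\<^sub>E [l] @ (y @ [(d, e)])"
    using rel_context[OF IH, of "[l]" "[]"] by simp
  finally show ?case by simp
qed simp

lemma dom_leD: "dom_le E a c \<Longrightarrow> E a d \<Longrightarrow> d = c \<or> E d c"
  unfolding dom_le_def lk_def st_def using adj_sym[of c d] by auto


lemma mem_cls_iff: "z \<in> cls x \<longleftrightarrow> x \<approx>\<^sub>E z"
  by (simp add: raag_class_def raag_equiv_def)

lemma cls_eq_iff: "cls x = cls y \<longleftrightarrow> x \<approx>\<^sub>E y"
proof
  assume "cls x = cls y"
  then show "x \<approx>\<^sub>E y" by (metis mem_cls_iff rel_refl)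
next
  assume xy: "x \<approx>\<^sub>E y"
  show "cls x = cls y"
    using rel_trans[OF xy] rel_trans[OF rel_sym[OF xy]] by (auto simp: mem_cls_iff)
qed

lemma carrier_RAAG: "carrier G = range cls"
  unfolding RAAG_def raag_class_def quotient_def by auto

lemma cls_in_carrier [simp]: "cls x \<in> carrier G"
  unfolding carrier_RAAG by simp

lemma carrier_RAAG_E:
  assumes "P \<in> carrier G"
  obtains x where "P = cls x"
  using assms unfolding carrier_RAAG by blast

lemma RAAG_mult_cls [simp]: "cls x \<otimes>\<^bsub>G\<^esub> cls y = cls (x @ y)"
proof -
  have "raag_mult E (cls x) (cls y) = cls (x @ y)"
  proof (rule Set.set_eqI)
    fix z
    show "z \<in> raag_mult E (cls x) (cls y) \<longleftrightarrow> z \<in> cls (x @ y)"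
    proof
      assume "z \<in> raag_mult E (cls x) (cls y)"
      then obtain x' y' where "x \<approx>\<^sub>E x'" "y \<approx>\<^sub>E y'" "x' @ y' \<approx>\<^sub>E z"
        unfolding raag_mult_def by (auto simp: mem_cls_iff raag_equiv_def)
      then show "z \<in> cls (x @ y)" by (simp add: mem_cls_iff rel_trans[OF rel_append])
    next
      assume "z \<in> cls (x @ y)"
      then have "(x @ y, z) \<in> raag_rel E" by (simp add: mem_cls_iff raag_equiv_def)
      moreover have "x \<in> cls x" "y \<in> cls y" by (simp_all add: mem_cls_iff)
      ultimately show "z \<in> raag_mult E (cls x) (cls y)"
        unfolding raag_mult_def by blast
    qed
  qed
  then show ?thesis by (simp add: RAAG_def)
qed

lemma RAAG_one [simp]: "\<one>\<^bsub>G\<^esub> = cls []"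
  by (simp add: RAAG_def)

lemma group_RAAG: "group G"
proof (rule groupI)
  fix P
  assume "P \<in> carrier G"
  then obtain x where x: "P = cls x" by (rule carrier_RAAG_E)
  then have "cls (inv_word x) \<otimes>\<^bsub>G\<^esub> P = \<one>\<^bsub>G\<^esub>"
    by (simp add: cls_eq_iff rel_inv_word_append)
  then show "\<exists>Q\<in>carrier G. Q \<otimes>\<^bsub>G\<^esub> P = \<one>\<^bsub>G\<^esub>"
    by (rule bexI) simp
qed (auto elim!: carrier_RAAG_E)

lemma group_AG: "group AG"
  by (rule group.AutoGroup[OF group_RAAG])

lemma carrier_AG: "carrier AG = auto G"
  by (simp add: AutoGroup_def BijGroup_def)

lemma mult_AG: "f \<in> auto G \<Longrightarrow> g \<in> auto G \<Longrightarrow> f \<otimes>\<^bsub>AG\<^esub> g = compose (carrier G) f g"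
  by (simp add: AutoGroup_def BijGroup_def auto_def)

lemma one_AG: "\<one>\<^bsub>AG\<^esub> = (\<lambda>P\<in>carrier G. P)"
  by (simp add: AutoGroup_def BijGroup_def)

end

section \<open>Endomorphisms induced by substitutions\<close>

definition preserves_commutation :: "('v \<Rightarrow> 'v \<Rightarrow> bool) \<Rightarrow> ('v \<Rightarrow> 'v word) \<Rightarrow> bool" where
  "preserves_commutation E \<sigma> \<longleftrightarrow> (\<forall>a c. E a c \<longrightarrow> raag_equiv E (\<sigma> a @ \<sigma> c) (\<sigma> c @ \<sigma> a))"

definition inverse_substs ::
  "('v \<Rightarrow> 'v \<Rightarrow> bool) \<Rightarrow> ('v \<Rightarrow> 'v word) \<Rightarrow> ('v \<Rightarrow> 'v word) \<Rightarrow> bool" where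
  "inverse_substs E \<sigma> \<tau> \<longleftrightarrow> preserves_commutation E \<sigma> \<and> preserves_commutation E \<tau> \<and>
     (\<forall>a. raag_equiv E (subst_word \<sigma> (\<tau> a)) [(a, True)]) \<and>
     (\<forall>a. raag_equiv E (subst_word \<tau> (\<sigma> a)) [(a, True)])"

lemma inverse_substs_sym: "inverse_substs E \<sigma> \<tau> \<Longrightarrow> inverse_substs E \<tau> \<sigma>"
  unfolding inverse_substs_def by auto

context raag
begin

lemma subst_word_raag_step:
  assumes \<sigma>: "preserves_commutation E \<sigma>" and step: "(x, y) \<in> raag_step E"
  shows "subst_word \<sigma> x \<approx>\<^sub>E subst_word \<sigma> y"
proof -
  let ?img = "\<lambda>a b. if b then \<sigma> a else inv_word (\<sigma> a)"
  from step consider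
      (cancel) p q a b where "x = p @ [(a, b), (a, \<not> b)] @ q" "y = p @ q"
    | (swap) p q a b c d where "x = p @ [(a, b), (c, d)] @ q" "y = p @ [(c, d), (a, b)] @ q" "E a c"
    unfolding raag_step_def by blast
  then show ?thesis
  proof cases
    case cancel
    have "?img a b @ ?img a (\<not> b) \<approx>\<^sub>E []"
      using rel_append_inv_word rel_inv_word_append by (cases b) auto
    with cancel show ?thesis using rel_context by fastforce
  next
    case swap
    then have "\<sigma> a @ \<sigma> c \<approx>\<^sub>E \<sigma> c @ \<sigma> a"
      using \<sigma> unfolding preserves_commutation_def by blast
    from rel_commute_signed[OF this, of b d] swap show ?thesis using rel_context by fastforce
  qed
qed

lemma subst_word_rel:
  assumes \<sigma>: "preserves_commutation E \<sigma>" and "x \<approx>\<^sub>E y"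
  shows "subst_word \<sigma> x \<approx>\<^sub>E subst_word \<sigma> y"
  using assms(2) unfolding raag_equiv_def raag_rel_def
proof (induction rule: rtrancl_induct)
  case (step y z)
  from step.hyps(2) have "subst_word \<sigma> y \<approx>\<^sub>E subst_word \<sigma> z"
  proof
    assume "(y, z) \<in> (raag_step E)\<inverse>"
    then show ?thesis by (simp add: rel_sym subst_word_raag_step[OF \<sigma>])
  qed (rule subst_word_raag_step[OF \<sigma>])
  with step.IH show ?case
    unfolding raag_equiv_def[symmetric] raag_rel_def[symmetric] by (rule rel_trans)
qed (simp flip: raag_equiv_def raag_rel_def)

lemma subst_word_rel_pointwise:
  assumes "\<And>a. \<sigma> a \<approx>\<^sub>E \<tau> a"
  shows "subst_word \<sigma> x \<approx>\<^sub>E subst_word \<tau> x"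
proof (induction x)
  case (Cons l x)
  have "(if snd l then \<sigma> (fst l) else inv_word (\<sigma> (fst l)))
      \<approx>\<^sub>E (if snd l then \<tau> (fst l) else inv_word (\<tau> (fst l)))"
    using assms rel_inv_word by simp
  with Cons.IH show ?case using rel_append by simp
qed simp

lemma preserves_commutation_letters: "preserves_commutation E (\<lambda>a. [(a, True)])"
  unfolding preserves_commutation_def using rel_swap[of _ _ "[]" True True "[]"] by simp

lemma preserves_commutation_subst_word:
  assumes "preserves_commutation E \<sigma>" "preserves_commutation E \<tau>"
  shows "preserves_commutation E (\<lambda>a. subst_word \<sigma> (\<tau> a))"
  using assms subst_word_rel[of \<sigma> "\<tau> _ @ \<tau> _" "\<tau> _ @ \<tau> _"]
  unfolding preserves_commutation_def by simp

lemma preserves_commutation_point_subst: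
  assumes "\<And>d c. E a d \<Longrightarrow> c \<in> fst ` set z \<Longrightarrow> c = d \<or> E d c"
  shows "preserves_commutation E (point_subst a z)"
  unfolding preserves_commutation_def
proof (intro allI impI)
  fix c d
  assume cd: "E c d"
  have commute: "[(d, True)] @ z \<approx>\<^sub>E z @ [(d, True)]" if "E a d" for d
    by (rule rel_letter_commute) (use assms that in blast)
  show "point_subst a z c @ point_subst a z d \<approx>\<^sub>E point_subst a z d @ point_subst a z c"
    using commute[of c] rel_sym[OF commute[of d]] adj_sym[OF cd] cd
      rel_swap[OF cd, of "[]" True True "[]"]
    by (cases "c = a"; cases "d = a") (simp_all add: point_subst_def)
qed

lemma raag_endo_cls:
  assumes \<sigma>: "preserves_commutation E \<sigma>"
  shows "raag_endo E \<sigma> (cls x) = cls (subst_word \<sigma> x)"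
proof -
  have "{z. \<exists>x'\<in>cls x. (subst_word \<sigma> x', z) \<in> raag_rel E} = cls (subst_word \<sigma> x)"
  proof (rule Set.set_eqI)
    fix z
    show "z \<in> {z. \<exists>x'\<in>cls x. (subst_word \<sigma> x', z) \<in> raag_rel E} \<longleftrightarrow> z \<in> cls (subst_word \<sigma> x)"
    proof
      assume "z \<in> {z. \<exists>x'\<in>cls x. (subst_word \<sigma> x', z) \<in> raag_rel E}"
      then obtain x' where "x \<approx>\<^sub>E x'" "subst_word \<sigma> x' \<approx>\<^sub>E z"
        by (auto simp: mem_cls_iff raag_equiv_def)
      then show "z \<in> cls (subst_word \<sigma> x)"
        by (simp add: mem_cls_iff rel_trans[OF subst_word_rel[OF \<sigma>]])
    next
      assume "z \<in> cls (subst_word \<sigma> x)"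
      moreover have "x \<in> cls x" by (simp add: mem_cls_iff)
      ultimately show "z \<in> {z. \<exists>x'\<in>cls x. (subst_word \<sigma> x', z) \<in> raag_rel E}"
        by (auto simp: mem_cls_iff raag_equiv_def)
    qed
  qed
  then show ?thesis unfolding raag_endo_def by simp
qed

lemma raag_endo_eqI:
  assumes "preserves_commutation E \<sigma>" "preserves_commutation E \<tau>" "\<And>a. \<sigma> a \<approx>\<^sub>E \<tau> a"
  shows "raag_endo E \<sigma> = raag_endo E \<tau>"
proof
  fix P
  show "raag_endo E \<sigma> P = raag_endo E \<tau> P"
  proof (cases "P \<in> carrier G")
    case True
    then obtain x where "P = cls x" by (rule carrier_RAAG_E)
    with assms show ?thesis
      using subst_word_rel_pointwise[of \<sigma> \<tau> x] by (simp add: raag_endo_cls cls_eq_iff)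
  qed (simp add: raag_endo_def)
qed

lemma raag_endo_letters: "raag_endo E (\<lambda>a. [(a, True)]) = (\<lambda>P\<in>carrier G. P)"
proof
  fix P
  show "raag_endo E (\<lambda>a. [(a, True)]) P = (\<lambda>P\<in>carrier G. P) P"
  proof (cases "P \<in> carrier G")
    case True
    then show ?thesis
      by (auto elim!: carrier_RAAG_E simp: raag_endo_cls[OF preserves_commutation_letters])
  qed (simp add: raag_endo_def)
qed

lemma raag_endo_compose:
  assumes "preserves_commutation E \<sigma>" "preserves_commutation E \<tau>"
  shows "compose (carrier G) (raag_endo E \<sigma>) (raag_endo E \<tau>)
       = raag_endo E (\<lambda>a. subst_word \<sigma> (\<tau> a))"
proof
  fix P
  show "compose (carrier G) (raag_endo E \<sigma>) (raag_endo E \<tau>) P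
      = raag_endo E (\<lambda>a. subst_word \<sigma> (\<tau> a)) P"
  proof (cases "P \<in> carrier G")
    case True
    then obtain x where "P = cls x" by (rule carrier_RAAG_E)
    with assms show ?thesis
      by (simp add: compose_def raag_endo_cls preserves_commutation_subst_word subst_word_subst_word)
  qed (simp add: raag_endo_def compose_def)
qed

lemma raag_endo_in_carrier:
  "preserves_commutation E \<sigma> \<Longrightarrow> P \<in> carrier G \<Longrightarrow> raag_endo E \<sigma> P \<in> carrier G"
  by (auto elim!: carrier_RAAG_E simp: raag_endo_cls)

lemma raag_endo_in_auto:
  assumes inv: "inverse_substs E \<sigma> \<tau>"
  shows "raag_endo E \<sigma> \<in> auto G"
proof -
  have \<sigma>: "preserves_commutation E \<sigma>" and \<tau>: "preserves_commutation E \<tau>"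
    using inv unfolding inverse_substs_def by auto
  have cancel: "raag_endo E \<beta> (raag_endo E \<alpha> P) = P"
    if "inverse_substs E \<alpha> \<beta>" "P \<in> carrier G" for \<alpha> \<beta> P
  proof -
    obtain x where x: "P = cls x" using \<open>P \<in> carrier G\<close> by (rule carrier_RAAG_E)
    have \<alpha>: "preserves_commutation E \<alpha>" and \<beta>: "preserves_commutation E \<beta>"
      using that(1) unfolding inverse_substs_def by auto
    have "subst_word (\<lambda>a. subst_word \<beta> (\<alpha> a)) x \<approx>\<^sub>E subst_word (\<lambda>a. [(a, True)]) x"
      by (rule subst_word_rel_pointwise) (use that(1) in \<open>simp add: inverse_substs_def\<close>)
    with x \<alpha> \<beta> show ?thesis by (simp add: raag_endo_cls subst_word_subst_word cls_eq_iff)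
  qed
  have hom: "raag_endo E \<sigma> \<in> hom G G"
    unfolding hom_def using raag_endo_in_carrier[OF \<sigma>]
    by (auto elim!: carrier_RAAG_E simp: raag_endo_cls[OF \<sigma>])
  have "bij_betw (raag_endo E \<sigma>) (carrier G) (carrier G)"
    using cancel[OF inv] cancel[OF inverse_substs_sym[OF inv]] raag_endo_in_carrier[OF \<sigma>]
      raag_endo_in_carrier[OF \<tau>]
    by (intro bij_betw_byWitness[where f' = "raag_endo E \<tau>"]) auto
  with hom show ?thesis
    unfolding auto_def Bij_def raag_endo_def by simp
qed

lemma raag_endo_in_carrier_AG: "inverse_substs E \<sigma> \<tau> \<Longrightarrow> raag_endo E \<sigma> \<in> carrier AG"
  using raag_endo_in_auto carrier_AG by simp

lemma raag_endo_mult: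
  assumes "inverse_substs E \<sigma> \<sigma>'" "inverse_substs E \<tau> \<tau>'"
  shows "raag_endo E \<sigma> \<otimes>\<^bsub>AG\<^esub> raag_endo E \<tau> = raag_endo E (\<lambda>a. subst_word \<sigma> (\<tau> a))"
proof -
  have "raag_endo E \<sigma> \<in> auto G" "raag_endo E \<tau> \<in> auto G"
    using assms by (auto intro: raag_endo_in_auto)
  with assms show ?thesis by (simp add: mult_AG raag_endo_compose inverse_substs_def)
qed

lemma raag_endo_inv:
  assumes inv: "inverse_substs E \<sigma> \<tau>"
  shows "inv\<^bsub>AG\<^esub> (raag_endo E \<sigma>) = raag_endo E \<tau>"
proof (rule group.inv_equality[OF group_AG])
  have \<sigma>: "preserves_commutation E \<sigma>" and \<tau>: "preserves_commutation E \<tau>"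
    using inv unfolding inverse_substs_def by auto
  have "raag_endo E \<tau> \<otimes>\<^bsub>AG\<^esub> raag_endo E \<sigma> = raag_endo E (\<lambda>a. subst_word \<tau> (\<sigma> a))"
    by (rule raag_endo_mult[OF inverse_substs_sym[OF inv] inv])
  also have "\<dots> = raag_endo E (\<lambda>a. [(a, True)])"
    by (rule raag_endo_eqI[OF preserves_commutation_subst_word[OF \<tau> \<sigma>] preserves_commutation_letters])
      (use inv in \<open>simp add: inverse_substs_def\<close>)
  finally show "raag_endo E \<tau> \<otimes>\<^bsub>AG\<^esub> raag_endo E \<sigma> = \<one>\<^bsub>AG\<^esub>"
    by (simp add: raag_endo_letters one_AG)
  show "raag_endo E \<sigma> \<in> carrier AG" by (rule raag_endo_in_carrier_AG[OF inv])
  show "raag_endo E \<tau> \<in> carrier AG" by (rule raag_endo_in_carrier_AG[OF inverse_substs_sym[OF inv]])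
qed

lemma expsum_rel: "x \<approx>\<^sub>E y \<Longrightarrow> expsum c x = expsum c y"
  unfolding raag_equiv_def raag_rel_def
proof (induction rule: rtrancl_induct)
  case (step y z)
  have "expsum c y = expsum c z" if "(y, z) \<in> raag_step E" for y z
    using that unfolding raag_step_def by auto
  with step show ?case by auto
qed simp

lemma expsum_cls_cls: "expsum_cls c (cls x) = expsum c x"
proof -
  have "(SOME z. z \<in> cls x) \<in> cls x"
    by (rule someI[of _ x]) (simp add: mem_cls_iff)
  then have "x \<approx>\<^sub>E (SOME z. z \<in> cls x)" by (simp add: mem_cls_iff)
  then show ?thesis unfolding expsum_cls_def by (rule expsum_rel[symmetric])
qed

lemma H1_matrix_raag_endo:
  "preserves_commutation E \<sigma> \<Longrightarrow> H1_matrix E (raag_endo E \<sigma>) a c = expsum c (\<sigma> a)"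
  unfolding H1_matrix_def by (simp add: raag_endo_cls expsum_cls_cls)

lemma raag_endo_in_SIA:
  assumes "raag_endo E \<sigma> \<in> SAut0 E" "preserves_commutation E \<sigma>"
    and "\<And>a c. int m dvd expsum c (\<sigma> a) - (if a = c then 1 else 0)"
  shows "raag_endo E \<sigma> \<in> SIA E m"
  using assms unfolding SIA_def by (simp add: H1_matrix_raag_endo cong_iff_dvd_diff)

end

section \<open>Transvections by words and partial conjugations\<close>

definition transv_subst :: "'v \<Rightarrow> 'v word \<Rightarrow> 'v \<Rightarrow> 'v word" where
  "transv_subst a x = point_subst a ((a, True) # x)"

definition transv_word :: "('v \<Rightarrow> 'v \<Rightarrow> bool) \<Rightarrow> 'v \<Rightarrow> 'v word \<Rightarrow> bool" where
  "transv_word E a x \<longleftrightarrow> a \<notin> fst ` set x \<and> (\<forall>d c. E a d \<longrightarrow> c \<in> fst ` set x \<longrightarrow> c = d \<or> E d c)"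

lemma transv_word_append: "transv_word E a x \<Longrightarrow> transv_word E a y \<Longrightarrow> transv_word E a (x @ y)"
  by (simp add: transv_word_def) blast

lemma transv_word_inv_word: "transv_word E a x \<Longrightarrow> transv_word E a (inv_word x)"
  by (simp add: transv_word_def)

lemma subst_word_transv_subst:
  "a \<notin> fst ` set y \<Longrightarrow> subst_word (transv_subst a x) (transv_subst a y c) = transv_subst a (x @ y) c"
  using subst_word_point_subst_fixing[of a y "(a, True) # x"]
  by (simp add: transv_subst_def point_subst_def)

context raag
begin

abbreviation transv where "transv a x \<equiv> raag_endo E (transv_subst a x)"

lemma transv_word_of_dom_le:
  assumes "\<And>c. c \<in> fst ` set x \<Longrightarrow> c \<noteq> a \<and> dom_le E a c"
  shows "transv_word E a x"
  using assms dom_leD unfolding transv_word_def by blast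

lemma preserves_commutation_transv_subst:
  "transv_word E a x \<Longrightarrow> preserves_commutation E (transv_subst a x)"
  unfolding transv_subst_def transv_word_def
  by (rule preserves_commutation_point_subst) (auto dest: adj_sym)

lemma inverse_substs_transv_subst:
  assumes x: "transv_word E a x"
  shows "inverse_substs E (transv_subst a x) (transv_subst a (inv_word x))"
proof -
  have notin: "a \<notin> fst ` set x" "a \<notin> fst ` set (inv_word x)"
    using x by (auto simp: transv_word_def)
  have "transv_subst a (x @ inv_word x) c \<approx>\<^sub>E [(c, True)]"
    and "transv_subst a (inv_word x @ x) c \<approx>\<^sub>E [(c, True)]" for c
    using rel_cancel_word[of "[(a, True)]" x "[]"] rel_cancel_inv_word[of "[(a, True)]" x "[]"]
    by (simp_all add: transv_subst_def point_subst_def)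
  with x notin show ?thesis
    unfolding inverse_substs_def
    by (simp add: preserves_commutation_transv_subst transv_word_inv_word subst_word_transv_subst)
qed

lemma transv_in_carrier: "transv_word E a x \<Longrightarrow> transv a x \<in> carrier AG"
  using raag_endo_in_carrier_AG inverse_substs_transv_subst by blast

lemma transv_mult:
  assumes "transv_word E a x" "transv_word E a y"
  shows "transv a x \<otimes>\<^bsub>AG\<^esub> transv a y = transv a (x @ y)"
proof -
  have "(\<lambda>c. subst_word (transv_subst a x) (transv_subst a y c)) = transv_subst a (x @ y)"
    using assms(2) by (simp add: transv_word_def subst_word_transv_subst)
  with raag_endo_mult[OF inverse_substs_transv_subst inverse_substs_transv_subst, OF assms]
  show ?thesis by simp
qed

lemma transv_inv: "transv_word E a x \<Longrightarrow> inv\<^bsub>AG\<^esub> (transv a x) = transv a (inv_word x)"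
  by (rule raag_endo_inv[OF inverse_substs_transv_subst])

lemma transv_Nil: "transv a [] = \<one>\<^bsub>AG\<^esub>"
proof -
  have "transv_subst a [] = (\<lambda>c. [(c, True)])"
    by (auto simp: transv_subst_def point_subst_def)
  then show ?thesis by (simp add: raag_endo_letters one_AG)
qed

lemma transv_rel:
  assumes "transv_word E a x" "transv_word E a y" "x \<approx>\<^sub>E y"
  shows "transv a x = transv a y"
proof (rule raag_endo_eqI)
  show "transv_subst a x c \<approx>\<^sub>E transv_subst a y c" for c
    using rel_context[OF assms(3), of "[(a, True)]" "[]"]
    by (simp add: transv_subst_def point_subst_def)
qed (use assms preserves_commutation_transv_subst in blast)+

lemma transvection_eq_transv: "transvection E a c = transv a [(c, True)]"
  by (simp add: transvection_def transv_subst_def point_subst_def)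

lemma transvection_pow:
  assumes "transv_word E a [(c, True)]"
  shows "transvection E a c [^]\<^bsub>AG\<^esub> n = transv a (replicate n (c, True))"
proof (induction n)
  case 0
  then show ?case by (simp add: transv_Nil)
next
  case (Suc n)
  have "transv_word E a (replicate n (c, True))"
    using assms by (auto simp: transv_word_def)
  with Suc assms show ?case
    by (simp add: transvection_eq_transv transv_mult replicate_append_same[symmetric])
qed

lemma transv_in_SAut0:
  assumes "\<And>c. c \<in> fst ` set x \<Longrightarrow> c \<noteq> a \<and> dom_le E a c"
  shows "transv a x \<in> SAut0 E"
  using assms
proof (induction x)
  case Nil
  then show ?case by (simp add: transv_Nil SAut0_def generate.one)
next
  case (Cons l x)
  obtain c b where l: "l = (c, b)" by force
  have c: "c \<noteq> a" "dom_le E a c" using Cons.prems l by auto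
  have word_c: "transv_word E a [(c, True)]" and word_l: "transv_word E a [l]"
    using c l by (auto intro!: transv_word_of_dom_le)
  have word_x: "transv_word E a x"
    using Cons.prems by (auto intro!: transv_word_of_dom_le)
  have gen: "transv a [(c, True)] \<in> {transvection E v w |v w. v \<noteq> w \<and> dom_le E v w}"
    using c by (auto simp: transvection_eq_transv)
  have "transv a [l] \<in> SAut0 E"
  proof (cases b)
    case True
    with l have "transv a [l] = transv a [(c, True)]" by simp
    also have "\<dots> \<in> SAut0 E"
      using gen unfolding SAut0_def by (rule generate.incl[OF UnI1])
    finally show ?thesis .
  next
    case False
    then have "transv a [l] = inv\<^bsub>AG\<^esub> (transv a [(c, True)])"
      using transv_inv[OF word_c] l by simp
    also have "\<dots> \<in> SAut0 E"
      using gen unfolding SAut0_def by (rule generate.inv[OF UnI1])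
    finally show ?thesis .
  qed
  moreover have "transv a x \<in> SAut0 E" using Cons by auto
  ultimately have "transv a [l] \<otimes>\<^bsub>AG\<^esub> transv a x \<in> SAut0 E"
    unfolding SAut0_def by (rule generate.eng)
  then show ?case using transv_mult[OF word_l word_x] by simp
qed

lemma transv_in_SIA:
  assumes "\<And>c. c \<in> fst ` set x \<Longrightarrow> c \<noteq> a \<and> dom_le E a c"
    and "\<And>c. int m dvd expsum c x"
  shows "transv a x \<in> SIA E m"
proof (rule raag_endo_in_SIA)
  show "transv a x \<in> SAut0 E" by (rule transv_in_SAut0[OF assms(1)])
  show "preserves_commutation E (transv_subst a x)"
    by (rule preserves_commutation_transv_subst[OF transv_word_of_dom_le[OF assms(1)]])
  show "int m dvd expsum c (transv_subst a x b) - (if b = c then 1 else 0)" for b c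
    using assms(2)[of c] by (simp add: transv_subst_def point_subst_def)
qed

definition conj_subst :: "'v \<Rightarrow> 'v \<Rightarrow> 'v \<Rightarrow> 'v word" where
  "conj_subst u v = point_subst v [(u, False), (v, True), (u, True)]"

lemma partial_conj_singleton: "partial_conj E u {v} = raag_endo E (conj_subst u v)"
  unfolding partial_conj_def conj_subst_def point_subst_def
  by (rule arg_cong[where f = "raag_endo E"]) auto

lemma inverse_substs_conj_subst:
  assumes "v \<noteq> u" "dom_le E v u"
  shows "inverse_substs E (conj_subst u v) (point_subst v [(u, True), (v, True), (u, False)])"
proof -
  have commute: "preserves_commutation E (point_subst v [(u, b), (v, True), (u, \<not> b)])" for b
    by (rule preserves_commutation_point_subst) (auto dest: adj_sym dom_leD[OF assms(2)])
  have "[(u, b), (u, \<not> b), (v, True), (u, b), (u, \<not> b)] \<approx>\<^sub>E [(v, True)]" for b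
  proof -
    have "[(u, b), (u, \<not> b), (v, True), (u, b), (u, \<not> b)] \<approx>\<^sub>E [(v, True), (u, b), (u, \<not> b)]"
      using rel_cancel[of "[]" u b "[(v, True), (u, b), (u, \<not> b)]"] by simp
    also have "\<dots> \<approx>\<^sub>E [(v, True)]"
      using rel_cancel[of "[(v, True)]" u b "[]"] by simp
    finally show ?thesis .
  qed
  from this[of True] this[of False] assms(1) commute[of True] commute[of False] show ?thesis
    unfolding inverse_substs_def conj_subst_def by (simp add: point_subst_def)
qed

lemma singleton_in_components_off_star:
  assumes "v \<noteq> u" "dom_le E v u" "\<not> E v u"
  shows "{v} \<in> components_off_star E u"
proof -
  let ?adj = "{(a, b). E a b \<and> a \<notin> st E u \<and> b \<notin> st E u}"
  have v: "v \<notin> st E u" using assms adj_sym by (auto simp: st_def lk_def)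
  have "b = v" if "(v, b) \<in> ?adj\<^sup>*" for b
    using that
  proof (induction rule: rtrancl_induct)
    case (step b b')
    then show ?case using assms(2) by (auto simp: dom_le_def lk_def)
  qed simp
  then have "?adj\<^sup>* `` {v} = {v}" by auto
  moreover have "?adj\<^sup>* `` {v} \<in> (UNIV - st E u) // ?adj\<^sup>*"
    using v by (intro quotientI) simp
  ultimately show ?thesis unfolding components_off_star_def by simp
qed

lemma partial_conj_singleton_in_SIA:
  assumes "v \<noteq> u" "dom_le E v u" "\<not> E v u"
  shows "partial_conj E u {v} \<in> SIA E m"
  unfolding partial_conj_singleton
proof (rule raag_endo_in_SIA)
  show "raag_endo E (conj_subst u v) \<in> SAut0 E"
    unfolding SAut0_def partial_conj_singleton[symmetric]
    using singleton_in_components_off_star[OF assms] by (blast intro: generate.incl)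
  show "preserves_commutation E (conj_subst u v)"
    using inverse_substs_conj_subst[OF assms(1,2)] by (simp add: inverse_substs_def)
  show "int m dvd expsum c (conj_subst u v a) - (if a = c then 1 else 0)" for a c
    using assms(1) by (auto simp: conj_subst_def point_subst_def)
qed

end

section \<open>Transvections along a chain \<open>v \<le> u \<le> w\<close>\<close>

lemma (in group) commutator_in_derived:
  "h \<in> H \<Longrightarrow> k \<in> H \<Longrightarrow> h \<otimes> k \<otimes> inv h \<otimes> inv k \<in> derived G H"
  unfolding derived_def by (rule generate.incl) blast

lemma (in group) commutator_eq_of_conj:
  assumes "a \<in> carrier G" "t \<in> carrier G" "t' \<in> carrier G" "a \<otimes> t = t' \<otimes> a"
  shows "a \<otimes> t \<otimes> inv a \<otimes> inv t = t' \<otimes> inv t"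
proof -
  have "a \<otimes> t \<otimes> inv a = t' \<otimes> a \<otimes> inv a" using assms(4) by simp
  also have "\<dots> = t'" using assms by (simp add: m_assoc)
  finally show ?thesis by simp
qed

locale dom_chain = raag E for E :: "'v \<Rightarrow> 'v \<Rightarrow> bool" +
  fixes v u w :: 'v and m :: nat
  assumes v_ne_u: "v \<noteq> u" and v_ne_w: "v \<noteq> w" and u_ne_w: "u \<noteq> w"
    and v_le_u: "dom_le E v u" and v_le_w: "dom_le E v w" and u_le_w: "dom_le E u w"
begin

abbreviation W where "W \<equiv> replicate m (w, True)"

text \<open>Intersecting with the carrier makes the derived subgroup a subgroup of AG; it is contained
  in SIA' E m by monotonicity of derived.\<close>
abbreviation level where "level \<equiv> SIA E m \<inter> carrier AG"
abbreviation level' where "level' \<equiv> derived AG level"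

definition uw_word :: "'v word \<Rightarrow> bool" where
  "uw_word x \<longleftrightarrow> fst ` set x \<subseteq> {u, w}"

lemma uw_word_simps [simp]:
  "uw_word []"
  "uw_word (x @ y) \<longleftrightarrow> uw_word x \<and> uw_word y"
  "uw_word (inv_word x) \<longleftrightarrow> uw_word x"
  "uw_word (l # x) \<longleftrightarrow> fst l \<in> {u, w} \<and> uw_word x"
  "uw_word (replicate n l) \<longleftrightarrow> n = 0 \<or> fst l \<in> {u, w}"
  by (auto simp: uw_word_def)

lemma transv_word_v: "uw_word x \<Longrightarrow> transv_word E v x"
  using v_ne_u v_ne_w v_le_u v_le_w by (intro transv_word_of_dom_le) (auto simp: uw_word_def)

lemma transv_word_u_W: "transv_word E u W"
  using u_ne_w u_le_w by (intro transv_word_of_dom_le) auto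

definition level_word :: "'v word \<Rightarrow> bool" where
  "level_word x \<longleftrightarrow> uw_word x \<and> int m dvd expsum u x \<and> int m dvd expsum w x"

lemma transv_v_in_level:
  assumes "level_word x"
  shows "transv v x \<in> level"
proof
  have "int m dvd expsum c x" for c
  proof (cases "c \<in> {u, w}")
    case False
    with assms have "c \<notin> fst ` set x" by (auto simp: level_word_def uw_word_def)
    then show ?thesis by (simp add: expsum_eq_0)
  qed (use assms in \<open>auto simp: level_word_def\<close>)
  with assms show "transv v x \<in> SIA E m"
    using v_ne_u v_ne_w v_le_u v_le_w
    by (intro transv_in_SIA) (auto simp: level_word_def uw_word_def)
  show "transv v x \<in> carrier AG"
    using assms by (simp add: transv_in_carrier transv_word_v level_word_def)
qed

lemma transv_u_W_in_level: "transv u W \<in> level"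
proof
  show "transv u W \<in> SIA E m"
    using u_ne_w u_le_w by (intro transv_in_SIA) auto
  show "transv u W \<in> carrier AG"
    by (rule transv_in_carrier[OF transv_word_u_W])
qed

lemma partial_conj_in_level:
  assumes "\<not> E v u"
  shows "partial_conj E u {v} \<in> level"
proof
  show "partial_conj E u {v} \<in> SIA E m"
    by (rule partial_conj_singleton_in_SIA[OF v_ne_u v_le_u assms])
  show "partial_conj E u {v} \<in> carrier AG"
    unfolding partial_conj_singleton
    by (rule raag_endo_in_carrier_AG[OF inverse_substs_conj_subst[OF v_ne_u v_le_u]])
qed

lemma uw_word_subst_transv_u_W:
  assumes "uw_word x"
  shows "uw_word (subst_word (transv_subst u W) x)"
proof -
  have "fst ` set (transv_subst u W c) \<subseteq> {u, w}" if "c \<in> {u, w}" for c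
    using that u_ne_w by (cases "c = u") (auto simp: transv_subst_def point_subst_def)
  with assms show ?thesis unfolding uw_word_def fst_set_subst_word by blast
qed

lemma transv_u_W_conj:
  assumes x: "uw_word x"
  shows "transv u W \<otimes>\<^bsub>AG\<^esub> transv v x
       = transv v (subst_word (transv_subst u W) x) \<otimes>\<^bsub>AG\<^esub> transv u W"
proof -
  let ?y = "subst_word (transv_subst u W) x"
  have y: "uw_word ?y" using uw_word_subst_transv_u_W[OF x] .
  have "subst_word (transv_subst u W) (transv_subst v x c)
      = subst_word (transv_subst v ?y) (transv_subst u W c)" for c
  proof (cases "c = v")
    case False
    have "subst_word (transv_subst v ?y) (transv_subst u W c) = transv_subst u W c"
      using v_ne_u v_ne_w False
      by (intro subst_word_fixing) (auto simp: transv_subst_def point_subst_def split: if_splits)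
    with False show ?thesis by (simp add: transv_subst_def point_subst_def)
  qed (use v_ne_u in \<open>simp add: transv_subst_def point_subst_def\<close>)
  then show ?thesis
    using raag_endo_mult[OF inverse_substs_transv_subst inverse_substs_transv_subst,
        OF transv_word_u_W transv_word_v[OF x]]
      raag_endo_mult[OF inverse_substs_transv_subst inverse_substs_transv_subst,
        OF transv_word_v[OF y] transv_word_u_W]
    by simp
qed

lemma partial_conj_conj:
  assumes x: "uw_word x"
  shows "partial_conj E u {v} \<otimes>\<^bsub>AG\<^esub> transv v x
       = transv v ([(u, True)] @ x @ [(u, False)]) \<otimes>\<^bsub>AG\<^esub> partial_conj E u {v}"
proof -
  let ?x' = "[(u, True)] @ x @ [(u, False)]"
  note conj = inverse_substs_conj_subst[OF v_ne_u v_le_u]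
  have \<gamma>: "preserves_commutation E (conj_subst u v)"
    using conj by (simp add: inverse_substs_def)
  have x': "uw_word ?x'" using x by simp
  have fixed: "subst_word (conj_subst u v) x = x"
    using x v_ne_u v_ne_w
    by (intro subst_word_fixing) (auto simp: conj_subst_def point_subst_def uw_word_def)
  have "raag_endo E (\<lambda>c. subst_word (conj_subst u v) (transv_subst v x c))
      = raag_endo E (\<lambda>c. subst_word (transv_subst v ?x') (conj_subst u v c))"
  proof (rule raag_endo_eqI)
    show "subst_word (conj_subst u v) (transv_subst v x c)
        \<approx>\<^sub>E subst_word (transv_subst v ?x') (conj_subst u v c)" for c
    proof (cases "c = v")
      case True
      have "[(u, False), (v, True), (u, True)] @ x
          \<approx>\<^sub>E [(u, False), (v, True), (u, True)] @ x @ [(u, False), (u, \<not> False)] @ []"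
        using rel_sym[OF rel_cancel[of "[(u, False), (v, True), (u, True)] @ x" u False "[]"]]
        by simp
      with True v_ne_u fixed show ?thesis
        by (simp add: transv_subst_def conj_subst_def point_subst_def)
    qed (simp add: transv_subst_def conj_subst_def point_subst_def)
  qed (use \<gamma> x x' in \<open>simp_all add: preserves_commutation_subst_word
      preserves_commutation_transv_subst transv_word_v\<close>)
  then show ?thesis
    unfolding partial_conj_singleton
    using raag_endo_mult[OF conj inverse_substs_transv_subst[OF transv_word_v[OF x]]]
      raag_endo_mult[OF inverse_substs_transv_subst[OF transv_word_v[OF x']] conj]
    by simp
qed

definition derived_word :: "'v word \<Rightarrow> bool" where
  "derived_word x \<longleftrightarrow> uw_word x \<and> transv v x \<in> level'"

lemma subgroup_level': "subgroup level' AG"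
  by (rule group.derived_is_subgroup[OF group_AG]) blast

lemma derived_word_Nil: "derived_word []"
  unfolding derived_word_def using subgroup.one_closed[OF subgroup_level'] by (simp add: transv_Nil)

lemma derived_word_append: "derived_word x \<Longrightarrow> derived_word y \<Longrightarrow> derived_word (x @ y)"
  unfolding derived_word_def
  using subgroup.m_closed[OF subgroup_level'] by (auto simp: transv_mult[symmetric] transv_word_v)

lemma derived_word_inv_word: "derived_word x \<Longrightarrow> derived_word (inv_word x)"
  unfolding derived_word_def
  using subgroup.m_inv_closed[OF subgroup_level'] by (auto simp: transv_inv[symmetric] transv_word_v)

lemma derived_word_rel:
  assumes "derived_word x" "uw_word y" "x \<approx>\<^sub>E y"
  shows "derived_word y"
proof -
  have "transv v x = transv v y"
    using assms by (intro transv_rel transv_word_v) (simp_all add: derived_word_def)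
  with assms show ?thesis by (simp add: derived_word_def)
qed

lemma derived_word_commutator:
  assumes "level_word x" "level_word y"
  shows "derived_word (x @ y @ inv_word x @ inv_word y)"
proof -
  have x: "transv_word E v x" and y: "transv_word E v y"
    using assms by (simp_all add: level_word_def transv_word_v)
  have "transv v x \<otimes>\<^bsub>AG\<^esub> transv v y \<otimes>\<^bsub>AG\<^esub> inv\<^bsub>AG\<^esub> (transv v x) \<otimes>\<^bsub>AG\<^esub> inv\<^bsub>AG\<^esub> (transv v y)
      \<in> level'"
    using assms by (intro group.commutator_in_derived[OF group_AG] transv_v_in_level)
  with x y assms show ?thesis
    by (simp add: derived_word_def level_word_def transv_inv transv_mult transv_word_append
        transv_word_inv_word)
qed

lemma derived_word_of_conj:
  assumes a: "a \<in> level" and x: "level_word x" and y: "uw_word y"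
    and conj: "a \<otimes>\<^bsub>AG\<^esub> transv v x = transv v y \<otimes>\<^bsub>AG\<^esub> a"
  shows "derived_word (y @ inv_word x)"
proof -
  have x': "transv_word E v x" and y': "transv_word E v y"
    using x y by (simp_all add: level_word_def transv_word_v)
  have "a \<otimes>\<^bsub>AG\<^esub> transv v x \<otimes>\<^bsub>AG\<^esub> inv\<^bsub>AG\<^esub> a \<otimes>\<^bsub>AG\<^esub> inv\<^bsub>AG\<^esub> (transv v x) \<in> level'"
    using a transv_v_in_level[OF x] by (rule group.commutator_in_derived[OF group_AG])
  also have "a \<otimes>\<^bsub>AG\<^esub> transv v x \<otimes>\<^bsub>AG\<^esub> inv\<^bsub>AG\<^esub> a \<otimes>\<^bsub>AG\<^esub> inv\<^bsub>AG\<^esub> (transv v x)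
      = transv v y \<otimes>\<^bsub>AG\<^esub> inv\<^bsub>AG\<^esub> (transv v x)"
    using a conj x' y' by (intro group.commutator_eq_of_conj[OF group_AG]) (auto intro: transv_in_carrier)
  also have "\<dots> = transv v (y @ inv_word x)"
    using x' y' by (simp add: transv_inv transv_mult transv_word_inv_word)
  finally show ?thesis
    using x y by (simp add: derived_word_def level_word_def)
qed

lemma derived_word_transv_u_W_conj:
  assumes "level_word x"
  shows "derived_word (subst_word (transv_subst u W) x @ inv_word x)"
  using assms uw_word_subst_transv_u_W
  by (intro derived_word_of_conj[OF transv_u_W_in_level] transv_u_W_conj) (auto simp: level_word_def)

lemma derived_word_u_conj:
  assumes "\<not> E v u" "level_word x"
  shows "derived_word ([(u, True)] @ x @ [(u, False)] @ inv_word x)"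
  using derived_word_of_conj[OF partial_conj_in_level[OF assms(1)] assms(2) _ partial_conj_conj]
    assms(2)
  by (simp add: level_word_def)


definition conj_W :: "nat \<Rightarrow> 'v word" where
  "conj_W i = replicate i (u, True) @ W @ replicate i (u, False)"

definition conj_W_prod :: "nat \<Rightarrow> 'v word" where
  "conj_W_prod k = concat (map conj_W [1..<Suc k])"

lemma conj_W_prod_0 [simp]: "conj_W_prod 0 = []"
  by (simp add: conj_W_prod_def)

lemma conj_W_prod_Suc [simp]: "conj_W_prod (Suc k) = conj_W_prod k @ conj_W (Suc k)"
  by (simp add: conj_W_prod_def)

lemma uw_word_conj_W_prod: "uw_word (conj_W_prod k)"
  by (induction k) (simp_all add: conj_W_def)

lemma level_word_conj_W_prod: "level_word (conj_W_prod k)"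
proof -
  have "expsum u (conj_W_prod k) = 0" "expsum w (conj_W_prod k) = int k * int m"
    using u_ne_w by (induction k) (auto simp: conj_W_def algebra_simps)
  then show ?thesis by (simp add: level_word_def uw_word_conj_W_prod)
qed

lemma level_word_conj_W: "level_word (conj_W i)"
  using u_ne_w by (simp add: level_word_def conj_W_def)

lemma level_word_conj_W_W_inv: "level_word (conj_W i @ replicate m (w, False))"
  using u_ne_w by (simp add: level_word_def conj_W_def)

lemma derived_word_conj_W_W_inv:
  assumes "\<not> E v u"
  shows "derived_word (conj_W i @ replicate m (w, False))"
proof (induction i)
  case 0
  show ?case
    using derived_word_rel[OF derived_word_Nil _ rel_sym[OF rel_append_inv_word[of W]]]
    by (simp add: conj_W_def)
next
  case (Suc i)
  have "derived_word ([(u, True)] @ conj_W i @ [(u, False)] @ inv_word (conj_W i))"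
    by (rule derived_word_u_conj[OF assms level_word_conj_W])
  then have "derived_word (conj_W (Suc i) @ inv_word (conj_W i))"
    by (simp add: conj_W_def replicate_app_Cons_same)
  from derived_word_append[OF this Suc.IH]
  show ?case
    using derived_word_rel[OF _ _ rel_cancel_inv_word[of "conj_W (Suc i)" "conj_W i" "replicate m (w, False)"]]
    by (simp add: conj_W_def)
qed

lemma derived_word_conj_W_prod:
  assumes "\<not> E v u"
  shows "derived_word (conj_W_prod k @ replicate (k * m) (w, False))"
proof (induction k)
  case 0
  then show ?case by (simp add: derived_word_Nil)
next
  case (Suc k)
  define Y where "Y = conj_W_prod k"
  define R where "R = conj_W (Suc k) @ replicate m (w, False)"
  define Z where "Z = replicate (k * m) (w, False)"
  have uw: "uw_word Y" "uw_word R" "uw_word Z"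
    by (simp_all add: Y_def R_def Z_def uw_word_conj_W_prod conj_W_def)
  have "derived_word (Y @ R @ inv_word Y @ inv_word R)"
    unfolding Y_def R_def
    by (rule derived_word_commutator[OF level_word_conj_W_prod level_word_conj_W_W_inv])
  moreover have "derived_word R"
    unfolding R_def by (rule derived_word_conj_W_W_inv[OF assms])
  moreover have "derived_word (Y @ Z)"
    unfolding Y_def Z_def by (rule Suc.IH)
  ultimately have derived: "derived_word ((Y @ R @ inv_word Y @ inv_word R) @ R @ Y @ Z)"
    by (rule derived_word_append[OF _ derived_word_append])
  have rel: "(Y @ R @ inv_word Y @ inv_word R) @ R @ Y @ Z \<approx>\<^sub>E Y @ R @ Z"
  proof -
    have "(Y @ R @ inv_word Y @ inv_word R) @ R @ Y @ Z \<approx>\<^sub>E (Y @ R @ inv_word Y) @ Y @ Z"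
      using rel_cancel_inv_word[of "Y @ R @ inv_word Y" R "Y @ Z"] by simp
    also have "\<dots> \<approx>\<^sub>E Y @ R @ Z"
      using rel_cancel_inv_word[of "Y @ R" Y Z] by simp
    finally show ?thesis .
  qed
  have "derived_word (Y @ R @ Z)"
    using derived_word_rel[OF derived _ rel] uw by simp
  then show ?case by (simp add: Y_def R_def Z_def replicate_add)
qed

lemma rel_u_W_power:
  "concat (replicate k ((u, True) # W)) @ replicate k (u, False) \<approx>\<^sub>E conj_W_prod k"
proof (induction k)
  case (Suc k)
  let ?A = "concat (replicate k ((u, True) # W))"
  let ?B = "(u, True) # W @ (u, False) # replicate k (u, False)"
  have "concat (replicate (Suc k) ((u, True) # W)) @ replicate (Suc k) (u, False) = ?A @ ?B"
    by (simp flip: replicate_append_same)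
  also have "\<dots> \<approx>\<^sub>E ?A @ inv_word (replicate k (u, True)) @ replicate k (u, True) @ ?B"
    by (rule rel_sym[OF rel_cancel_inv_word])
  also have "\<dots> \<approx>\<^sub>E conj_W_prod k @ replicate k (u, True) @ ?B"
    using rel_append[OF Suc.IH rel_refl] by simp
  also have "\<dots> = conj_W_prod (Suc k)"
    by (simp add: conj_W_def replicate_app_Cons_same)
  finally show ?case .
qed simp

lemma derived_word_u_W_power:
  "derived_word (concat (replicate m ((u, True) # W)) @ replicate m (u, False))"
proof -
  have "level_word (replicate m (u, True))"
    using u_ne_w by (simp add: level_word_def)
  moreover have "subst_word (transv_subst u W) (replicate m (u, True))
      = concat (replicate m ((u, True) # W))"
    by (simp add: subst_word_replicate transv_subst_def point_subst_def)
  ultimately show ?thesis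
    using derived_word_transv_u_W_conj[of "replicate m (u, True)"] by simp
qed

lemma derived_word_W_power_nonadjacent:
  assumes "\<not> E v u"
  shows "derived_word (replicate (m * m) (w, True))"
proof -
  let ?Z = "concat (replicate m ((u, True) # W)) @ replicate m (u, False)"
  let ?P = "conj_W_prod m @ replicate (m * m) (w, False)"
  have derived: "derived_word (inv_word ?Z @ ?P)"
    by (rule derived_word_append[OF derived_word_inv_word[OF derived_word_u_W_power]
          derived_word_conj_W_prod[OF assms]])
  have rel: "inv_word ?Z @ ?P \<approx>\<^sub>E replicate (m * m) (w, False)"
  proof -
    have "inv_word ?Z @ ?P \<approx>\<^sub>E inv_word (conj_W_prod m) @ ?P"
      by (rule rel_append[OF rel_inv_word[OF rel_u_W_power] rel_refl])
    also have "\<dots> \<approx>\<^sub>E replicate (m * m) (w, False)"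
      using rel_cancel_inv_word[of "[]" "conj_W_prod m"] by simp
    finally show ?thesis .
  qed
  have "derived_word (replicate (m * m) (w, False))"
    using derived_word_rel[OF derived _ rel] by simp
  from derived_word_inv_word[OF this] show ?thesis by simp
qed

lemma rel_u_W_power_commuting:
  assumes "E u w"
  shows "concat (replicate k ((u, True) # W)) \<approx>\<^sub>E replicate (k * m) (w, True) @ replicate k (u, True)"
proof (induction k)
  case (Suc k)
  have "concat (replicate (Suc k) ((u, True) # W))
      \<approx>\<^sub>E [(u, True)] @ (W @ replicate (k * m) (w, True)) @ replicate k (u, True)"
    using rel_context[OF Suc.IH, of "(u, True) # W" "[]"] by simp
  also have "\<dots> \<approx>\<^sub>E (W @ replicate (k * m) (w, True)) @ [(u, True)] @ replicate k (u, True)"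
    using assms
    by (intro rel_append[OF rel_letter_commute rel_refl, simplified append_assoc]) auto
  also have "\<dots> = replicate (Suc k * m) (w, True) @ replicate (Suc k) (u, True)"
    by (simp add: replicate_add)
  finally show ?case .
qed simp

lemma derived_word_W_power_adjacent:
  assumes "E u w"
  shows "derived_word (replicate (m * m) (w, True))"
proof -
  have "concat (replicate m ((u, True) # W)) @ replicate m (u, False)
      \<approx>\<^sub>E replicate (m * m) (w, True) @ replicate m (u, True) @ inv_word (replicate m (u, True)) @ []"
    using rel_append[OF rel_u_W_power_commuting[OF assms] rel_refl] by simp
  also have "\<dots> \<approx>\<^sub>E replicate (m * m) (w, True) @ []"
    by (rule rel_cancel_word)
  finally show ?thesis
    using derived_word_rel[OF derived_word_u_W_power] by simp
qed

lemma transvection_pow_in_SIA': "transvection E v w [^]\<^bsub>AG\<^esub> (m ^ 2) \<in> SIA' E m"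
proof -
  have "\<not> E v u" if "\<not> E u w"
  proof
    assume "E v u"
    then have "E v w" using dom_leD[OF u_le_w adj_sym] v_ne_w by blast
    then have "E w u" using dom_leD[OF v_le_u] u_ne_w by blast
    with that show False using adj_sym[of w u] by blast
  qed
  then have "derived_word (replicate (m * m) (w, True))"
    using derived_word_W_power_adjacent derived_word_W_power_nonadjacent by blast
  moreover have "transvection E v w [^]\<^bsub>AG\<^esub> (m ^ 2) = transv v (replicate (m * m) (w, True))"
    using transvection_pow[OF transv_word_v] by (simp add: power2_eq_square)
  moreover have "level' \<subseteq> SIA' E m"
    unfolding SIA'_def by (rule group.mono_derived[OF group_AG]) blast
  ultimately show ?thesis by (auto simp: derived_word_def)
qed

end

theorem lemma3p8:
  fixes E :: "'v::finite \<Rightarrow> 'v \<Rightarrow> bool" and v w :: 'v and m :: nat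
  assumes "simplicial_graph E"
    and "property_B2 E"
    and "v \<noteq> w" and "dom_le E v w"
  shows "transvection E v w [^]\<^bsub>AutoGroup (RAAG E)\<^esub> (m ^ 2) \<in> SIA' E m"
proof -
  obtain u where "u \<noteq> v" "u \<noteq> w" "dom_le E v u" "dom_le E u w"
    using assms(2-4) unfolding property_B2_def by blast
  with assms(1,3,4) have "dom_chain E v u w"
    by unfold_locales (auto simp: simplicial_graph_def)
  then show ?thesis by (rule dom_chain.transvection_pow_in_SIA')
qed

end
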